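(* Suppose the gain matrix $V$ is irreducible. Then the max-min SIR-balancing problem $\max_{p\in\mathcal P}\min_{k\in\mathcal K}\mathrm{SIR}_k(p)/\gamma_k$ has a unique maximizer $\bar p$, and $\bar p=\bar p'$, where $\bar p'=(\frac{1}{t'}I-\Gamma V)^{-1}\Gamma z$ and $t'$ is the largest $t>0$ for which there exists $p\in\mathcal P$ with $(\frac1t I-\Gamma V)p=\Gamma z$. In particular $\bar p>0$.
   Context: Network model: $K\ge 2$ links, $\mathcal K=\{1,\dots,K\}$. Power constraint set $\mathcal P=\{p\in\mathbb R_+^K: Cp\le\hat p\}$, where $C\in\{0,1\}^{N\times K}$ has at least one entry equal to $1$ in each column and $\hat p=(P_1,\dots,P_N)\in\mathbb R_{++}^N$. Gain matrix $V\in\mathbb R_+^{K\times K}$ with zero diagonal, noise vector $z\in\mathbb R_{++}^K$, $\mathrm{SIR}_k(p)=p_k/((Vp)_k+z_k)$. SIR targets $\gamma_1,\dots,\gamma_K>0$ and $\Gamma=\mathrm{diag}(\gamma_1,\dots,\gamma_K)$. *)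

theory Defs
  imports "HOL-Analysis.Analysis"
begin

text \<open>Links are indexed by a finite type 'k (so K = CARD('k)); power constraints
by a finite type 'n (so N = CARD('n)). Vectors are real^'k, matrices real^'k^'k.\<close>

definition SIR :: "real^'k^'k \<Rightarrow> real^'k \<Rightarrow> real^'k \<Rightarrow> 'k \<Rightarrow> real" where
  "SIR V z p k = p $ k / ((V *v p) $ k + z $ k)"

definition balance_obj :: "real^'k^'k \<Rightarrow> real^'k \<Rightarrow> real^'k \<Rightarrow> real^'k::finite \<Rightarrow> real" where
  "balance_obj V z gamma p = Min (range (\<lambda>k. SIR V z p k / gamma $ k))"

definition power_set :: "real^'k^'n \<Rightarrow> real^'n \<Rightarrow> (real^'k) set" where
  "power_set C phat = {p. (\<forall>k. 0 \<le> p $ k) \<and> (\<forall>i. (C *v p) $ i \<le> phat $ i)}"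

definition diag_mat :: "real^'k \<Rightarrow> real^'k^'k" where
  "diag_mat g = (\<chi> i j. if i = j then g $ i else 0)"

text \<open>Irreducibility of a nonnegative square matrix: its directed graph
(edge i -> j iff V_ij > 0) is strongly connected.\<close>
definition irreducible_mat :: "real^'k^'k \<Rightarrow> bool" where
  "irreducible_mat V \<longleftrightarrow> (\<forall>i j. (i, j) \<in> {(a, b). V $ a $ b > 0}\<^sup>+)"

end

theory Submission
  imports Defs
begin

text \<open>
  For a level t > 0 write A_t = t \<Gamma> V and b_t = t \<Gamma> z, so that
  min_k SIR_k(p)/\<gamma>_k \<ge> t  iff  A_t p + b_t \<le> p  (p a "supersolution" at level t), and
  ((1/t) I - \<Gamma> V) p = \<Gamma> z  iff  p = A_t p + b_t  (p a "fixed point" at level t).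

  Then the balancing objective is shown to be continuous on the compact set \<P>,
  so a maximizer p* with value t* > 0 exists.  At level t* the maximizer is a
  supersolution, so (1/t*) I - \<Gamma> V is invertible and q = A q + b has a positive
  solution.  Any maximizer p \<noteq> q would satisfy p > q componentwise, so Cq < p_hat
  strictly and a scaled-up copy \<lambda> q (\<lambda> > 1) is feasible with a larger objective,
  a contradiction.  Hence every maximizer equals q, which gives uniqueness, the
  formula for p*, positivity, and maximality of t* among solvable levels.
\<close>

section \<open>Nonnegative matrices with a positive supersolution\<close>

lemma nonneg_matrix_mult_nonneg:
  fixes A :: "real^'m^'n"
  assumes "\<forall>i j. 0 \<le> A$i$j" and "0 \<le> x"
  shows "0 \<le> A *v x"
  using assms unfolding less_eq_vec_def matrix_vector_mult_def by (simp add: sum_nonneg)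

text \<open>Subinvariance: if x \<ge> A x and some nonnegative p satisfies p \<ge> A p + b with
  b > 0, then x \<ge> 0.  Otherwise shift x by the least multiple s p making it
  nonnegative; at a component where the shifted vector vanishes the strict
  inequality coming from b is violated.\<close>
lemma subsolution_nonneg:
  fixes A :: "real^'k::finite^'k"
  assumes A_nonneg: "\<forall>i j. 0 \<le> A$i$j" and b_pos: "\<forall>k. 0 < b$k"
    and p_nonneg: "0 \<le> p" and p_super: "A *v p + b \<le> p"
    and x_sub: "A *v x \<le> x"
  shows "0 \<le> x"
proof (rule ccontr)
  assume "\<not> 0 \<le> x"
  then obtain k where xk: "x$k < 0" unfolding less_eq_vec_def by (auto simp: not_le)
  have Ap: "0 \<le> A *v p" by (rule nonneg_matrix_mult_nonneg[OF A_nonneg p_nonneg])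
  have p_pos: "0 < p$j" for j
  proof -
    have "(A *v p)$j + b$j \<le> p$j" "0 \<le> (A *v p)$j"
      using p_super Ap unfolding less_eq_vec_def by simp_all
    thus ?thesis using b_pos[rule_format, of j] by linarith
  qed
  define s where "s = Max (range (\<lambda>j. - x$j / p$j))"
  have s_ge: "- x$j / p$j \<le> s" for j unfolding s_def by simp
  have "0 < - x$k / p$k" using xk p_pos[of k] by (simp add: divide_neg_pos)
  hence s_pos: "0 < s" using s_ge[of k] by linarith
  have "s \<in> range (\<lambda>j. - x$j / p$j)" unfolding s_def by (rule Max_in) auto
  then obtain k0 where k0: "- x$k0 / p$k0 = s" by blast
  define y where "y = x + s *\<^sub>R p"
  have "0 \<le> y$j" for j
  proof -
    have "- x$j \<le> s * p$j" using s_ge[of j] p_pos[of j] by (simp only: pos_divide_le_eq)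
    thus ?thesis unfolding y_def by simp
  qed
  hence y_nonneg: "0 \<le> y" unfolding less_eq_vec_def by simp
  have y_k0: "y$k0 = 0" unfolding y_def using k0 p_pos[of k0] by (simp add: field_simps)
  have Ay: "(A *v y)$k0 = (A *v x)$k0 + s * (A *v p)$k0"
    unfolding y_def by (simp add: matrix_vector_right_distrib matrix_vector_mult_scaleR)
  have "(A *v x)$k0 \<le> x$k0" "(A *v p)$k0 + b$k0 \<le> p$k0"
    using x_sub p_super unfolding less_eq_vec_def by simp_all
  hence "(A *v x)$k0 + s * ((A *v p)$k0 + b$k0) \<le> x$k0 + s * p$k0"
    using s_pos by (intro add_mono mult_left_mono) auto
  hence "(A *v y)$k0 + s * b$k0 \<le> y$k0"
    unfolding Ay y_def by (simp add: algebra_simps)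
  moreover have "0 \<le> (A *v y)$k0"
    using nonneg_matrix_mult_nonneg[OF A_nonneg y_nonneg] unfolding less_eq_vec_def by simp
  moreover have "0 < s * b$k0" using s_pos b_pos by simp
  ultimately show False using y_k0 by linarith
qed

text \<open>Consequently I - A has trivial kernel: both x and -x are subsolutions.\<close>
lemma fixed_point_of_matrix_zero:
  fixes A :: "real^'k::finite^'k"
  assumes A_nonneg: "\<forall>i j. 0 \<le> A$i$j" and b_pos: "\<forall>k. 0 < b$k"
    and p_nonneg: "0 \<le> p" and p_super: "A *v p + b \<le> p"
    and x_fixed: "A *v x = x"
  shows "x = 0"
proof -
  have "0 \<le> x" using subsolution_nonneg[OF assms(1-4)] x_fixed by simp
  moreover have "A *v (- x) = - x"
    using matrix_vector_mult_diff_distrib[of A 0 x] x_fixed by simp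
  hence "0 \<le> - x" using subsolution_nonneg[OF assms(1-4), of "- x"] by simp
  ultimately show ?thesis by (simp add: order_antisym)
qed

text \<open>For an irreducible nonnegative A, a nonnegative x with x \<ge> A x + c, where the
  slack c \<ge> 0 is positive somewhere, is positive everywhere: zeros of x
  propagate along the edges of the graph of A and would reach the slack.\<close>
lemma irreducible_supersolution_pos:
  fixes A :: "real^'k::finite^'k"
  assumes A_nonneg: "\<forall>i j. 0 \<le> A$i$j" and A_irr: "irreducible_mat A"
    and x_nonneg: "0 \<le> x" and x_super: "A *v x + c \<le> x"
    and c_nonneg: "0 \<le> c" and c_m: "0 < c$m"
  shows "0 < x$k"
proof (rule ccontr)
  have x0: "0 \<le> x$j" for j using x_nonneg unfolding less_eq_vec_def by simp
  have Ax0: "0 \<le> (A *v x)$j" for j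
    using nonneg_matrix_mult_nonneg[OF A_nonneg x_nonneg] unfolding less_eq_vec_def by simp
  have propagate: "x$j = 0" if xi: "x$i = 0" and Aij: "0 < A$i$j" for i j
  proof -
    have "A$i$j * x$j \<le> (\<Sum>l\<in>UNIV. A$i$l * x$l)"
      by (rule member_le_sum) (use A_nonneg x0 in auto)
    also have "\<dots> = (A *v x)$i" by (simp add: matrix_vector_mult_def)
    also have "\<dots> \<le> 0"
    proof -
      have "(A *v x)$i + c$i \<le> x$i" "0 \<le> c$i"
        using x_super c_nonneg unfolding less_eq_vec_def by simp_all
      thus ?thesis using xi by linarith
    qed
    finally show ?thesis using Aij x0[of j] by (simp add: mult_le_0_iff)
  qed
  assume "\<not> 0 < x$k"
  hence xk: "x$k = 0" using x0[of k] by simp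
  have "(k, m) \<in> {(a, b). 0 < A$a$b}\<^sup>+"
    using A_irr unfolding irreducible_mat_def by blast
  hence "x$m = 0"
    using xk by (induction rule: trancl_induct) (auto intro: propagate)
  moreover have "0 < x$m"
  proof -
    have "(A *v x)$m + c$m \<le> x$m" using x_super unfolding less_eq_vec_def by simp
    thus ?thesis using c_m Ax0[of m] by linarith
  qed
  ultimately show False by simp
qed

text \<open>Any supersolution other than the fixed point q = A q + b lies strictly above
  q: the difference is a nonnegative supersolution with nonzero slack.\<close>
lemma supersolution_strictly_above_fixed_point:
  fixes A :: "real^'k::finite^'k"
  assumes A_nonneg: "\<forall>i j. 0 \<le> A$i$j" and A_irr: "irreducible_mat A"
    and b_pos: "\<forall>k. 0 < b$k"
    and p_nonneg: "0 \<le> p" and p_super: "A *v p + b \<le> p"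
    and q_fixed: "A *v q + b = q" and p_ne_q: "p \<noteq> q"
  shows "q$k < p$k"
proof -
  define c where "c = p - (A *v p + b)"
  have c_nonneg: "0 \<le> c" using p_super unfolding c_def by simp
  have x_eq: "A *v (p - q) + c = p - q"
    using q_fixed unfolding c_def by (simp add: matrix_vector_mult_diff_distrib algebra_simps)
  have "A *v (p - q) \<le> p - q" using x_eq c_nonneg by (metis le_add_same_cancel1)
  hence x_nonneg: "0 \<le> p - q" by (rule subsolution_nonneg[OF A_nonneg b_pos p_nonneg p_super])
  have "c \<noteq> 0"
  proof
    assume "c = 0"
    hence "p - q = 0"
      using fixed_point_of_matrix_zero[OF A_nonneg b_pos p_nonneg p_super, of "p - q"] x_eq by simp
    with p_ne_q show False by simp
  qed
  then obtain m where "c$m \<noteq> 0" by (auto simp: vec_eq_iff)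
  hence "0 < c$m" using c_nonneg unfolding less_eq_vec_def by (simp add: order_le_neq_trans)
  hence "0 < (p - q)$k"
    using irreducible_supersolution_pos[OF A_nonneg A_irr x_nonneg _ c_nonneg] x_eq by simp
  thus ?thesis by simp
qed

text \<open>The fixed point q = A q + b is positive: q \<ge> A q, so q \<ge> 0, and then q \<ge> b.\<close>
lemma fixed_point_pos:
  fixes A :: "real^'k::finite^'k"
  assumes A_nonneg: "\<forall>i j. 0 \<le> A$i$j" and b_pos: "\<forall>k. 0 < b$k"
    and p_nonneg: "0 \<le> p" and p_super: "A *v p + b \<le> p"
    and q_fixed: "A *v q + b = q"
  shows "0 < q$k"
proof -
  have "A *v q \<le> q" using q_fixed b_pos unfolding less_eq_vec_def
    by (metis less_imp_le le_add_same_cancel1 vector_add_component)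
  hence "0 \<le> A *v q"
    by (intro nonneg_matrix_mult_nonneg[OF A_nonneg] subsolution_nonneg[OF assms(1-4)])
  thus ?thesis using q_fixed b_pos unfolding less_eq_vec_def
    by (metis add_nonneg_pos vector_add_component zero_index)
qed

section \<open>The balancing objective\<close>

lemma diag_mat_mult_vec: "(diag_mat g *v y) $ k = g$k * y$k"
  unfolding diag_mat_def matrix_vector_mult_def
  by (simp add: if_distrib[of "\<lambda>u. u * _"] cong: if_cong)

definition gain_op :: "real \<Rightarrow> real^'k \<Rightarrow> real^'k^'k \<Rightarrow> real^'k^'k::finite" where
  "gain_op t gamma V = t *\<^sub>R (diag_mat gamma ** V)"

lemma gain_op_mult_vec: "(gain_op t g V *v x) $ k = t * g$k * (V *v x)$k"
  unfolding gain_op_def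
  by (simp add: scaleR_matrix_vector_assoc[symmetric] matrix_vector_mul_assoc[symmetric] diag_mat_mult_vec)

lemma gain_op_entry: "gain_op t g V $ i $ j = t * g$i * V$i$j"
  unfolding gain_op_def diag_mat_def matrix_matrix_mult_def
  by (simp add: if_distrib[of "\<lambda>u. u * _"] cong: if_cong)

lemma gain_op_nonneg:
  assumes "0 \<le> t" and "\<forall>k. 0 < g$k" and "\<forall>i j. 0 \<le> V$i$j"
  shows "\<forall>i j. 0 \<le> gain_op t g V $ i $ j"
  using assms by (simp add: gain_op_entry less_imp_le)

text \<open>Positive row scaling does not change the graph of V, hence keeps irreducibility.\<close>
lemma gain_op_irreducible:
  assumes "0 < t" and "\<forall>k. 0 < g$k" and "\<forall>i j. 0 \<le> V$i$j" and "irreducible_mat V"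
  shows "irreducible_mat (gain_op t g V)"
proof -
  have "0 < gain_op t g V $ i $ j \<longleftrightarrow> 0 < V$i$j" for i j
  proof -
    have "0 < t * g$i" using assms(1,2) by simp
    thus ?thesis unfolding gain_op_entry by (metis mult_pos_pos zero_less_mult_pos)
  qed
  thus ?thesis using assms(4) unfolding irreducible_mat_def by simp
qed

lemma level_rhs_component:
  "(gain_op t g V *v p + t *\<^sub>R (diag_mat g *v z)) $ k = t * g$k * ((V *v p)$k + z$k)"
  by (simp add: gain_op_mult_vec diag_mat_mult_vec algebra_simps)

lemma level_equation_iff:
  assumes "0 < t"
  shows "((1/t) *\<^sub>R mat 1 - diag_mat g ** V) *v p = y \<longleftrightarrow> p = gain_op t g V *v p + t *\<^sub>R y"
proof -
  have "(((1/t) *\<^sub>R mat 1 - diag_mat g ** V) *v p)$k = (p - gain_op t g V *v p)$k / t" for k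
    using assms by (simp add: matrix_vector_mult_diff_rdistrib scaleR_matrix_vector_assoc[symmetric]
        matrix_vector_mul_assoc[symmetric] diag_mat_mult_vec gain_op_mult_vec field_simps)
  thus ?thesis using assms by (auto simp: vec_eq_iff field_simps)
qed

lemma balance_obj_ge_iff:
  fixes V :: "real^'k::finite^'k"
  assumes V_nonneg: "\<forall>i j. 0 \<le> V$i$j" and g_pos: "\<forall>k. 0 < g$k" and z_pos: "\<forall>k. 0 < z$k"
    and p_nonneg: "0 \<le> p"
  shows "t \<le> balance_obj V z g p \<longleftrightarrow> gain_op t g V *v p + t *\<^sub>R (diag_mat g *v z) \<le> p"
    and "t < balance_obj V z g p \<longleftrightarrow>
           (\<forall>k. (gain_op t g V *v p + t *\<^sub>R (diag_mat g *v z)) $ k < p$k)"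
proof -
  have den_pos: "0 < (V *v p)$k + z$k" for k
    using nonneg_matrix_mult_nonneg[OF V_nonneg p_nonneg] z_pos[rule_format, of k]
    unfolding less_eq_vec_def by (simp add: add_nonneg_pos)
  have le: "t \<le> SIR V z p k / g$k \<longleftrightarrow> t * g$k * ((V *v p)$k + z$k) \<le> p$k" for k
    using den_pos[of k] g_pos[rule_format, of k] unfolding SIR_def
    by (simp add: pos_le_divide_eq mult.assoc mult.commute[of "g$k"])
  have less: "t < SIR V z p k / g$k \<longleftrightarrow> t * g$k * ((V *v p)$k + z$k) < p$k" for k
    using den_pos[of k] g_pos[rule_format, of k] unfolding SIR_def
    by (simp add: pos_less_divide_eq mult.assoc mult.commute[of "g$k"])
  show "t \<le> balance_obj V z g p \<longleftrightarrow> gain_op t g V *v p + t *\<^sub>R (diag_mat g *v z) \<le> p"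
    unfolding balance_obj_def less_eq_vec_def level_rhs_component using le by (simp add: Min_ge_iff)
  show "t < balance_obj V z g p \<longleftrightarrow> (\<forall>k. (gain_op t g V *v p + t *\<^sub>R (diag_mat g *v z)) $ k < p$k)"
    unfolding balance_obj_def level_rhs_component using less by (simp add: Min_gr_iff)
qed

lemma continuous_on_Min_finite:
  assumes "finite A" "A \<noteq> {}" "\<forall>k\<in>A. continuous_on S (f k)"
  shows "continuous_on S (\<lambda>p. Min ((\<lambda>k. f k p) ` A) :: real)"
  using assms
proof (induction A rule: finite_ne_induct)
  case (singleton x) thus ?case by simp
next
  case (insert a A)
  have "continuous_on S (\<lambda>p. min (f a p) (Min ((\<lambda>k. f k p) ` A)))"
    using insert by (intro continuous_on_min) auto
  thus ?case using insert by simp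
qed

text \<open>On nonnegative powers all SIR denominators are positive, so the objective is
  continuous there.\<close>
lemma balance_obj_continuous:
  fixes V :: "real^'k::finite^'k"
  assumes V_nonneg: "\<forall>i j. 0 \<le> V$i$j" and z_pos: "\<forall>k. 0 < z$k" and g_pos: "\<forall>k. 0 < g$k"
    and S_nonneg: "\<forall>p\<in>S. 0 \<le> p"
  shows "continuous_on S (balance_obj V z g)"
proof -
  have "continuous_on S (\<lambda>p. SIR V z p k / g$k)" for k
    unfolding SIR_def
  proof (intro continuous_intros ballI)
    fix p assume "p \<in> S"
    hence "0 \<le> (V *v p)$k"
      using S_nonneg nonneg_matrix_mult_nonneg[OF V_nonneg] unfolding less_eq_vec_def by simp
    thus "(V *v p) $ k + z $ k \<noteq> 0" using z_pos[rule_format, of k] by linarith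
    show "g $ k \<noteq> 0" using g_pos by (metis less_irrefl)
  qed
  hence "continuous_on S (\<lambda>p. Min ((\<lambda>k. SIR V z p k / g$k) ` UNIV))"
    by (intro continuous_on_Min_finite) auto
  thus ?thesis unfolding balance_obj_def by simp
qed

section \<open>The feasible power set\<close>

lemma power_set_nonneg: "p \<in> power_set C phat \<Longrightarrow> 0 \<le> p"
  unfolding power_set_def less_eq_vec_def by simp

text \<open>Every link is constrained by some row of C, so \<P> is bounded; it is closed as
  an intersection of closed half-spaces.\<close>
lemma power_set_compact:
  fixes C :: "real^'k::finite^'n::finite"
  assumes C_nonneg: "\<forall>i k. 0 \<le> C$i$k" and C_col: "\<forall>k. \<exists>i. C$i$k = 1"
  shows "compact (power_set C phat)"
proof -
  have closed: "closed (power_set C phat)"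
    unfolding power_set_def
    by (intro closed_Collect_all closed_Collect_conj closed_Collect_le continuous_intros)
  define B where "B = Max (range (\<lambda>i. phat$i))"
  have "power_set C phat \<subseteq> cbox 0 (\<chi> k. B)"
  proof
    fix p assume p: "p \<in> power_set C phat"
    have p0: "\<forall>k. 0 \<le> p$k" using p unfolding power_set_def by simp
    show "p \<in> cbox 0 (\<chi> k. B)" unfolding mem_box_cart
    proof
      fix k
      obtain i where i: "C$i$k = 1" using C_col by blast
      have "p$k = C$i$k * p$k" using i by simp
      also have "\<dots> \<le> (\<Sum>j\<in>UNIV. C$i$j * p$j)"
        by (rule member_le_sum) (use C_nonneg p0 in auto)
      also have "\<dots> \<le> phat$i" using p unfolding power_set_def matrix_vector_mult_def by simp
      also have "\<dots> \<le> B" unfolding B_def by simp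
      finally show "0$k \<le> p$k \<and> p$k \<le> (\<chi> k. B)$k" using p0 by simp
    qed
  qed
  hence "bounded (power_set C phat)" using bounded_cbox bounded_subset by blast
  thus ?thesis using closed compact_eq_bounded_closed by blast
qed

text \<open>A small constant power vector is feasible, and it has positive objective;
  hence the optimal balance level is positive.\<close>
lemma power_set_has_positive_objective:
  fixes C :: "real^'k::finite^'n::finite"
  assumes C01: "\<forall>i k. C$i$k = 0 \<or> C$i$k = 1" and phat_pos: "\<forall>i. 0 < phat$i"
    and V_nonneg: "\<forall>i j. 0 \<le> V$i$j" and g_pos: "\<forall>k. 0 < g$k" and z_pos: "\<forall>k. 0 < z$k"
  shows "\<exists>p\<in>power_set C phat. 0 < balance_obj V z g p"
proof
  define d where "d = Min (range (\<lambda>i. phat$i)) / real CARD('k)"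
  have d_pos: "0 < d" unfolding d_def using phat_pos by (simp add: Min_gr_iff)
  define p :: "real^'k" where "p = (\<chi> k. d)"
  have "(C *v p)$i \<le> phat$i" for i
  proof -
    have "(C *v p)$i = (\<Sum>j\<in>UNIV. C$i$j * d)" unfolding p_def by (simp add: matrix_vector_mult_def)
    also have "\<dots> \<le> (\<Sum>j\<in>(UNIV::'k set). d)"
      by (rule sum_mono) (use C01 d_pos in \<open>metis less_imp_le mult_1 mult_zero_left order_refl\<close>)
    also have "\<dots> = Min (range (\<lambda>i. phat$i))" unfolding d_def by simp
    also have "\<dots> \<le> phat$i" by simp
    finally show ?thesis .
  qed
  thus "p \<in> power_set C phat" unfolding power_set_def p_def using d_pos by simp
  show "0 < balance_obj V z g p"
    using balance_obj_ge_iff(2)[OF V_nonneg g_pos z_pos, of p 0] d_pos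
    unfolding p_def less_eq_vec_def by (simp add: gain_op_def)
qed

text \<open>If p is feasible and q lies strictly below p, then q satisfies every power
  constraint strictly (zero rows of C give the trivial bound 0 < p_hat).\<close>
lemma power_constraints_strict_below:
  fixes C :: "real^'k::finite^'n::finite"
  assumes C_nonneg: "\<forall>i k. 0 \<le> C$i$k" and phat_pos: "\<forall>i. 0 < phat$i"
    and p: "p \<in> power_set C phat" and q_below: "\<forall>k. q$k < p$k"
  shows "(C *v q)$i < phat$i"
proof (cases "\<exists>j. 0 < C$i$j")
  case True
  then obtain j where j: "0 < C$i$j" by blast
  have "0 < C$i$j * (p - q)$j" using j q_below by simp
  also have "\<dots> \<le> (\<Sum>l\<in>UNIV. C$i$l * (p - q)$l)"
    by (rule member_le_sum) (use C_nonneg q_below in \<open>auto simp: less_imp_le\<close>)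
  also have "\<dots> = (C *v p)$i - (C *v q)$i"
    by (simp add: matrix_vector_mult_def algebra_simps sum_subtractf)
  moreover have "(C *v p)$i \<le> phat$i" using p unfolding power_set_def by simp
  ultimately show ?thesis by linarith
next
  case False
  hence "\<forall>j. C$i$j = 0" using C_nonneg by (meson not_less order_antisym)
  hence "(C *v q)$i = 0" by (simp add: matrix_vector_mult_def)
  thus ?thesis using phat_pos by simp
qed

lemma power_set_scale_up:
  fixes C :: "real^'k::finite^'n::finite"
  assumes q_nonneg: "0 \<le> q" and strict: "\<forall>i. (C *v q)$i < phat$i"
  shows "\<exists>r>1. r *\<^sub>R q \<in> power_set C phat"
proof -
  have "\<forall>\<^sub>F r in at_right 1. (C *v q)$i * r < phat$i" for i
  proof (rule order_tendstoD(2))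
    show "((\<lambda>r. (C *v q)$i * r) \<longlongrightarrow> (C *v q)$i * 1) (at_right 1)"
      by (intro tendsto_intros)
  qed (use strict in simp)
  hence "\<forall>\<^sub>F r in at_right 1. 1 < r \<and> (\<forall>i. (C *v q)$i * r < phat$i)"
    by (intro eventually_conj eventually_at_right_less eventually_all_finite)
  then obtain r where "1 < r" "\<forall>i. (C *v q)$i * r < phat$i"
    using eventually_happens by fastforce
  moreover have "0 \<le> r *\<^sub>R q" using q_nonneg \<open>1 < r\<close> by (intro scaleR_nonneg_nonneg) auto
  ultimately show ?thesis unfolding power_set_def less_eq_vec_def
    by (auto simp: matrix_vector_mult_scaleR mult.commute intro!: less_imp_le)
qed

section \<open>The optimal balance level\<close>

lemma level_fixed_point:
  fixes V :: "real^'k::finite^'k"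
  assumes V_nonneg: "\<forall>i j. 0 \<le> V$i$j" and g_pos: "\<forall>k. 0 < g$k" and z_pos: "\<forall>k. 0 < z$k"
    and t_pos: "0 < t"
    and p_nonneg: "0 \<le> p" and p_super: "gain_op t g V *v p + t *\<^sub>R (diag_mat g *v z) \<le> p"
  defines "M \<equiv> (1/t) *\<^sub>R mat 1 - diag_mat g ** V"
  shows "invertible M"
    and "gain_op t g V *v (matrix_inv M *v (diag_mat g *v z)) + t *\<^sub>R (diag_mat g *v z)
           = matrix_inv M *v (diag_mat g *v z)"
    and "\<forall>k. 0 < (matrix_inv M *v (diag_mat g *v z)) $ k"
proof -
  let ?A = "gain_op t g V" and ?b = "t *\<^sub>R (diag_mat g *v z)"
  have A_nonneg: "\<forall>i j. 0 \<le> ?A$i$j" using gain_op_nonneg[OF _ g_pos V_nonneg] t_pos by simp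
  have b_pos: "\<forall>k. 0 < ?b$k" using t_pos g_pos z_pos by (simp add: diag_mat_mult_vec)
  have "\<forall>x. M *v x = 0 \<longrightarrow> x = 0"
    using fixed_point_of_matrix_zero[OF A_nonneg b_pos p_nonneg p_super]
      level_equation_iff[OF t_pos] unfolding M_def by (metis add.right_neutral scaleR_zero_right)
  thus inv: "invertible M" using matrix_left_invertible_ker invertible_left_inverse by blast
  define q where "q = matrix_inv M *v (diag_mat g *v z)"
  have "M ** matrix_inv M = mat 1" using inv unfolding invertible_def matrix_inv_def
    by (rule someI2_ex) auto
  hence "M *v q = diag_mat g *v z"
    unfolding q_def by (metis matrix_vector_mul_assoc matrix_vector_mul_lid)
  hence q_fixed: "?A *v q + ?b = q" using level_equation_iff[OF t_pos] unfolding M_def by metis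
  thus "?A *v q + ?b = q" unfolding q_def .
  show "\<forall>k. 0 < q$k" using fixed_point_pos[OF A_nonneg b_pos p_nonneg p_super q_fixed] by blast
qed

text \<open>A maximizer p \<noteq> q would lie strictly above q, so q could be
  scaled up inside \<P>, and the scaled vector has objective strictly above t.\<close>
lemma maximizer_is_fixed_point:
  fixes C :: "real^'k::finite^'n::finite" and V :: "real^'k^'k"
  assumes C_nonneg: "\<forall>i k. 0 \<le> C$i$k" and phat_pos: "\<forall>i. 0 < phat$i"
    and V_nonneg: "\<forall>i j. 0 \<le> V$i$j" and V_irr: "irreducible_mat V"
    and g_pos: "\<forall>k. 0 < g$k" and z_pos: "\<forall>k. 0 < z$k" and t_pos: "0 < t"
    and t_max: "\<forall>p'\<in>power_set C phat. balance_obj V z g p' \<le> t"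
    and p: "p \<in> power_set C phat" and p_opt: "t \<le> balance_obj V z g p"
    and q_fixed: "gain_op t g V *v q + t *\<^sub>R (diag_mat g *v z) = q"
  shows "p = q"
proof (rule ccontr)
  let ?A = "gain_op t g V" and ?b = "t *\<^sub>R (diag_mat g *v z)"
  have A_nonneg: "\<forall>i j. 0 \<le> ?A$i$j" using gain_op_nonneg[OF _ g_pos V_nonneg] t_pos by simp
  have A_irr: "irreducible_mat ?A" by (rule gain_op_irreducible[OF t_pos g_pos V_nonneg V_irr])
  have b_pos: "\<forall>k. 0 < ?b$k" using t_pos g_pos z_pos by (simp add: diag_mat_mult_vec)
  have p_nonneg: "0 \<le> p" using p by (rule power_set_nonneg)
  have p_super: "?A *v p + ?b \<le> p"
    using balance_obj_ge_iff(1)[OF V_nonneg g_pos z_pos p_nonneg] p_opt by simp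
  assume "p \<noteq> q"
  hence q_below: "\<forall>k. q$k < p$k"
    using supersolution_strictly_above_fixed_point[OF A_nonneg A_irr b_pos p_nonneg p_super q_fixed]
    by blast
  have q_nonneg: "0 \<le> q"
    using fixed_point_pos[OF A_nonneg b_pos p_nonneg p_super q_fixed]
    unfolding less_eq_vec_def by (simp add: less_imp_le)
  obtain r where r: "1 < r" "r *\<^sub>R q \<in> power_set C phat"
    using power_set_scale_up[OF q_nonneg] power_constraints_strict_below[OF C_nonneg phat_pos p q_below]
    by blast
  have "(?A *v (r *\<^sub>R q) + ?b)$k < (r *\<^sub>R q)$k" for k
  proof -
    have "(r *\<^sub>R q)$k = (?A *v (r *\<^sub>R q))$k + r * ?b$k"
      using arg_cong[OF q_fixed, of "\<lambda>v. r * v$k"]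
      by (simp add: matrix_vector_mult_scaleR algebra_simps)
    thus ?thesis using r(1) b_pos[rule_format, of k] by (simp add: mult_less_cancel_right1)
  qed
  hence "t < balance_obj V z g (r *\<^sub>R q)"
    using balance_obj_ge_iff(2)[OF V_nonneg g_pos z_pos power_set_nonneg[OF r(2)]] by blast
  with t_max r(2) show False by fastforce
qed

theorem mainTheorem2:
  fixes C :: "real^'k::finite^'n::finite"
    and phat :: "real^'n"
    and V :: "real^'k^'k"
    and z :: "real^'k"
    and gamma :: "real^'k"
  assumes K2: "CARD('k) \<ge> 2"
    and C01: "\<forall>i k. C $ i $ k = 0 \<or> C $ i $ k = 1"
    and Ccol: "\<forall>k. \<exists>i. C $ i $ k = 1"
    and phat_pos: "\<forall>i. phat $ i > 0"
    and V_nonneg: "\<forall>i j. V $ i $ j \<ge> 0"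
    and V_diag: "\<forall>k. V $ k $ k = 0"
    and z_pos: "\<forall>k. z $ k > 0"
    and gamma_pos: "\<forall>k. gamma $ k > 0"
    and V_irr: "irreducible_mat V"
  shows "\<exists>pbar.
           (pbar \<in> power_set C phat \<and>
            (\<forall>p \<in> power_set C phat. balance_obj V z gamma p \<le> balance_obj V z gamma pbar)) \<and>
           (\<forall>q. q \<in> power_set C phat \<and>
                (\<forall>p \<in> power_set C phat. balance_obj V z gamma p \<le> balance_obj V z gamma q)
                \<longrightarrow> q = pbar) \<and>
           (\<exists>t'. t' > 0 \<and>
                 (\<exists>p \<in> power_set C phat.
                    ((1 / t') *\<^sub>R mat 1 - diag_mat gamma ** V) *v p = diag_mat gamma *v z) \<and>
                 (\<forall>t. t > 0 \<and> (\<exists>p \<in> power_set C phat.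
                        ((1 / t) *\<^sub>R mat 1 - diag_mat gamma ** V) *v p = diag_mat gamma *v z)
                      \<longrightarrow> t \<le> t') \<and>
                 invertible ((1 / t') *\<^sub>R mat 1 - diag_mat gamma ** V) \<and>
                 pbar = matrix_inv ((1 / t') *\<^sub>R mat 1 - diag_mat gamma ** V) *v (diag_mat gamma *v z)) \<and>
           (\<forall>k. pbar $ k > 0)"
proof -
  let ?P = "power_set C phat" and ?obj = "balance_obj V z gamma"
  let ?M = "\<lambda>t. (1 / t) *\<^sub>R mat 1 - diag_mat gamma ** V"
  have C_nonneg: "\<forall>i k. 0 \<le> C$i$k" using C01 by (metis order_refl zero_le_one)
  obtain p0 where p0: "p0 \<in> ?P" "0 < ?obj p0"
    using power_set_has_positive_objective[OF C01 phat_pos V_nonneg gamma_pos z_pos] by blast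
  obtain ps where ps: "ps \<in> ?P" and ps_max: "\<forall>p\<in>?P. ?obj p \<le> ?obj ps"
    using continuous_attains_sup[OF power_set_compact[OF C_nonneg Ccol] _
        balance_obj_continuous[OF V_nonneg z_pos gamma_pos]] p0(1) power_set_nonneg by blast
  define ts where "ts = ?obj ps"
  have ts_pos: "0 < ts" using ps_max p0 unfolding ts_def by (meson less_le_trans)
  have ps_super: "gain_op ts gamma V *v ps + ts *\<^sub>R (diag_mat gamma *v z) \<le> ps"
    using balance_obj_ge_iff(1)[OF V_nonneg gamma_pos z_pos power_set_nonneg[OF ps]] ts_def by blast
  note fixed_point = level_fixed_point[OF V_nonneg gamma_pos z_pos ts_pos power_set_nonneg[OF ps] ps_super]
  define pbar where "pbar = matrix_inv (?M ts) *v (diag_mat gamma *v z)"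
  have maximizer_eq: "p = pbar" if "p \<in> ?P" "\<forall>p'\<in>?P. ?obj p' \<le> ?obj p" for p
    using maximizer_is_fixed_point[OF C_nonneg phat_pos V_nonneg V_irr gamma_pos z_pos ts_pos _ that(1)
        _ fixed_point(2)] that ps ps_max unfolding pbar_def ts_def by (meson order_antisym)
  have ps_eq: "ps = pbar" using maximizer_eq ps ps_max by blast
  have level_le: "t \<le> ts" if "0 < t" "p \<in> ?P" "?M t *v p = diag_mat gamma *v z" for t p
  proof -
    have "gain_op t gamma V *v p + t *\<^sub>R (diag_mat gamma *v z) \<le> p"
      using level_equation_iff[OF \<open>0 < t\<close>] that(3) by (metis order_refl)
    hence "t \<le> ?obj p" using balance_obj_ge_iff(1)[OF V_nonneg gamma_pos z_pos power_set_nonneg] that(2) by blast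
    thus ?thesis using ps_max that(2) unfolding ts_def by (meson order_trans)
  qed
  have pbar_solves: "?M ts *v pbar = diag_mat gamma *v z"
    using level_equation_iff[OF ts_pos] fixed_point(2) unfolding pbar_def by metis
  show ?thesis
    using ps ps_max ps_eq maximizer_eq ts_pos pbar_solves level_le fixed_point(1,3) pbar_def
    by (intro exI[of _ pbar] conjI exI[of _ ts]) blast+
qed

end
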